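(* Let $\Omega_3$ be a set with $3$ elements and $v_0:2^{\Omega_3}\to[0,\infty)$ non-decreasing with $v_0(\emptyset)=0$. Define $v_{n+1}(A)=\sup_{\mathcal I\in\Sigma}\mu_{v_n,\mathcal I}(A)$, $A\subset\Omega_3$, $n\ge0$. Then $v_1=v_2=\cdots$ and $v_1$ is submodular.
   Context: $\Sigma$ denotes the set of all chains $\mathcal I\subset2^{\Omega_3}$ (totally ordered by inclusion) containing $\emptyset$ and $\Omega_3$ and generating $2^{\Omega_3}$ as a $\sigma$-algebra (equivalently, maximal chains of subsets). For non-decreasing $v$ and $\mathcal I\in\Sigma$, $\mu_{v,\mathcal I}$ is the unique measure on $2^{\Omega_3}$ with $\mu_{v,\mathcal I}(I)=v(I)$ for $I\in\mathcal I$. Non-decreasing means $v(A)\le v(B)$ for $A\subset B$; submodular means $v(A)+v(B)\ge v(A\cup B)+v(A\cap B)$. *)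

theory Defs
  imports "HOL-Analysis.Analysis"
begin

definition maximal_chains :: "'a set \<Rightarrow> 'a set set set" where
  "maximal_chains \<Omega> =
     {C. C \<subseteq> Pow \<Omega> \<and> (\<forall>A\<in>C. \<forall>B\<in>C. A \<subseteq> B \<or> B \<subseteq> A)
         \<and> {} \<in> C \<and> \<Omega> \<in> C \<and> sigma_sets \<Omega> C = Pow \<Omega>}"

definition chain_measure :: "'a set \<Rightarrow> ('a set \<Rightarrow> real) \<Rightarrow> 'a set set \<Rightarrow> 'a measure" where
  "chain_measure \<Omega> v C =
     (THE \<mu>. sets \<mu> = Pow \<Omega> \<and> (\<forall>I\<in>C. emeasure \<mu> I = ennreal (v I)))"

definition next_v :: "'a set \<Rightarrow> ('a set \<Rightarrow> real) \<Rightarrow> ('a set \<Rightarrow> real)" where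
  "next_v \<Omega> v = (\<lambda>A. SUP C\<in>maximal_chains \<Omega>. measure (chain_measure \<Omega> v C) A)"

definition non_decreasing_on :: "'a set \<Rightarrow> ('a set \<Rightarrow> real) \<Rightarrow> bool" where
  "non_decreasing_on \<Omega> v = (\<forall>A B. A \<subseteq> B \<and> B \<subseteq> \<Omega> \<longrightarrow> v A \<le> v B)"

definition submodular_on :: "'a set \<Rightarrow> ('a set \<Rightarrow> real) \<Rightarrow> bool" where
  "submodular_on \<Omega> v =
     (\<forall>A B. A \<subseteq> \<Omega> \<and> B \<subseteq> \<Omega> \<longrightarrow> v A + v B \<ge> v (A \<union> B) + v (A \<inter> B))"

end

theory Submission
  imports Defs
begin

text \<open>
  On a three-point set the maximal chains are exactly the flags {} \<subset> {p} \<subset> {p, q} \<subset> \<Omega>,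
  and the chain measure of such a flag puts the increments of v along the flag on p, q and
  the remaining point r. So next_v v is a maximum of finitely many measures, all giving \<Omega>
  the mass v \<Omega> and {} the mass 0. Two non-nested subsets A, B of a three-point set are either
  disjoint or cover \<Omega>; either way a single one of these measures attains the maximum at both
  A \<union> B and A \<inter> B, and its modularity gives the submodular inequality for v1 = next_v v0.
  Conversely, if v is submodular then every flag measure lies below v, while the flag through
  A shows v A \<le> next_v v A; hence v1 is a fixed point of next_v.
\<close>

lemma card3_complete_pair:
  assumes "card \<Omega> = 3" "p \<in> \<Omega>" "r \<in> \<Omega>" "p \<noteq> r"
  obtains q where "distinct [p, q, r]" "\<Omega> = {p, q, r}"
proof -
  have "card (\<Omega> - {p, r}) = 1"
    using assms by (simp add: card_Diff_subset card_gt_0_iff)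
  then obtain q where "\<Omega> - {p, r} = {q}" by (rule card_1_singletonE)
  with assms(2-4) show ?thesis using that[of q] by auto
qed

lemma card3_subset_in_flag:
  assumes "card \<Omega> = 3" "A \<subseteq> \<Omega>"
  obtains p q r where "distinct [p, q, r]" "\<Omega> = {p, q, r}" "A \<in> {{}, {p}, {p, q}, \<Omega>}"
proof (cases "A = {} \<or> A = \<Omega>")
  case True
  obtain p q r where "\<Omega> = {p, q, r}" "p \<noteq> q" "q \<noteq> r" "p \<noteq> r"
    using assms(1) unfolding card_3_iff by blast
  then show ?thesis using True by (intro that[of p q r]) auto
next
  case False
  then obtain p r where "p \<in> A" "r \<in> \<Omega>" "r \<notin> A" using assms(2) by blast
  moreover obtain q where "distinct [p, q, r]" "\<Omega> = {p, q, r}"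
    using card3_complete_pair[OF assms(1)] calculation assms(2) by blast
  moreover have "A = {p} \<or> A = {p, q}"
    using calculation assms(2) by auto
  ultimately show ?thesis by (intro that[of p q r]) auto
qed

lemma subset3_cases:
  assumes "A \<subseteq> {p, q, r}"
  obtains "A = {}" | "A = {p}" | "A = {q}" | "A = {r}" | "A = {p, q}" | "A = {p, r}" | "A = {q, r}"
    | "A = {p, q, r}"
proof -
  have "A \<in> Pow {p, q, r}" using assms by simp
  then show ?thesis using that by (simp add: Pow_insert insert_commute) blast
qed

lemma subsets_card_le_3_cases:
  assumes "finite \<Omega>" "card \<Omega> \<le> 3" "A \<subseteq> \<Omega>" "B \<subseteq> \<Omega>"
  shows "A \<subseteq> B \<or> B \<subseteq> A \<or> A \<inter> B = {} \<or> A \<union> B = \<Omega>"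
proof (rule ccontr)
  assume "\<not> ?thesis"
  then obtain a b c d where "a \<in> A - B" "b \<in> B - A" "c \<in> A \<inter> B" "d \<in> \<Omega> - (A \<union> B)"
    using assms(3,4) by blast
  then have "a \<noteq> b" "a \<noteq> c" "a \<noteq> d" "b \<noteq> c" "b \<noteq> d" "c \<noteq> d" "{a, b, c, d} \<subseteq> \<Omega>"
    using assms(3,4) by auto
  then have "4 \<le> card \<Omega>"
    using card_mono[OF assms(1), of "{a, b, c, d}"] by simp
  with assms(2) show False by simp
qed

lemma sigma_sets_inseparable:
  assumes "x \<in> \<Omega>" "y \<in> \<Omega>" "\<forall>I\<in>C. x \<in> I \<longleftrightarrow> y \<in> I" "X \<in> sigma_sets \<Omega> C"
  shows "x \<in> X \<longleftrightarrow> y \<in> X"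
  using assms(4) by induction (use assms(1-3) in auto)

lemma maximal_chain_separates_points:
  assumes "C \<in> maximal_chains \<Omega>" "x \<in> \<Omega>" "y \<in> \<Omega>" "x \<noteq> y"
  shows "\<exists>I\<in>C. (x \<in> I) \<noteq> (y \<in> I)"
proof (rule ccontr)
  assume "\<not> ?thesis"
  moreover have "{x} \<in> sigma_sets \<Omega> C"
    using assms unfolding maximal_chains_def by auto
  ultimately show False
    using sigma_sets_inseparable[of x \<Omega> y C "{x}"] assms(2-4) by auto
qed

lemma separating_chain_gap_singleton:
  assumes chain: "\<forall>A\<in>C. \<forall>B\<in>C. A \<subseteq> B \<or> B \<subseteq> A" and "C \<subseteq> Pow \<Omega>"
    and separating: "\<And>x y. x \<in> \<Omega> \<Longrightarrow> y \<in> \<Omega> \<Longrightarrow> x \<noteq> y \<Longrightarrow> \<exists>I\<in>C. (x \<in> I) \<noteq> (y \<in> I)"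
    and "M \<in> C" "N \<in> C" "M \<subset> N"
    and gap: "\<And>I. I \<in> C \<Longrightarrow> M \<subseteq> I \<Longrightarrow> I \<subseteq> N \<Longrightarrow> I = M \<or> I = N"
  shows "\<exists>x. N - M = {x}"
proof -
  have "x = y" if xy: "x \<in> N - M" "y \<in> N - M" for x y
  proof (rule ccontr)
    assume "x \<noteq> y"
    then obtain I where I: "I \<in> C" "(x \<in> I) \<noteq> (y \<in> I)"
      using separating xy \<open>N \<in> C\<close> \<open>C \<subseteq> Pow \<Omega>\<close> by blast
    then have "\<not> I \<subseteq> M" "\<not> N \<subseteq> I" "I \<noteq> M" "I \<noteq> N"
      using xy by auto
    moreover have "M \<subseteq> I" "I \<subseteq> N"
      using chain I(1) \<open>M \<in> C\<close> \<open>N \<in> C\<close> calculation(1,2) by blast+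
    ultimately show False using gap I(1) by blast
  qed
  moreover have "N - M \<noteq> {}" using \<open>M \<subset> N\<close> by blast
  ultimately show ?thesis by blast
qed

lemma maximal_chain_least_greatest:
  assumes "finite \<Omega>" "\<Omega> \<noteq> {}" "C \<in> maximal_chains \<Omega>"
  obtains p r where "{p} \<in> C" "\<And>I. I \<in> C \<Longrightarrow> I \<noteq> {} \<Longrightarrow> p \<in> I"
    and "r \<in> \<Omega>" "\<Omega> - {r} \<in> C" "\<And>I. I \<in> C \<Longrightarrow> I \<noteq> \<Omega> \<Longrightarrow> r \<notin> I"
proof -
  have CP: "C \<subseteq> Pow \<Omega>" and chain: "\<forall>A\<in>C. \<forall>B\<in>C. A \<subseteq> B \<or> B \<subseteq> A"
    and "{} \<in> C" "\<Omega> \<in> C"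
    using assms(3) unfolding maximal_chains_def by auto
  have "finite C" using CP assms(1) by (meson finite_Pow_iff finite_subset)
  have separating: "\<exists>I\<in>C. (x \<in> I) \<noteq> (y \<in> I)" if "x \<in> \<Omega>" "y \<in> \<Omega>" "x \<noteq> y" for x y
    using maximal_chain_separates_points[OF assms(3) that] .
  obtain M where M: "M \<in> C" "M \<noteq> {}" and M_min: "\<And>I. I \<in> C \<Longrightarrow> I \<noteq> {} \<Longrightarrow> I \<subseteq> M \<Longrightarrow> I = M"
    using finite_has_minimal[of "C - {{}}"] \<open>finite C\<close> \<open>\<Omega> \<in> C\<close> assms(2) by blast
  obtain p where p: "M = {p}"
    using separating_chain_gap_singleton[OF chain CP separating \<open>{} \<in> C\<close> M(1)] M M_min
    by auto
  obtain N where N: "N \<in> C" "N \<noteq> \<Omega>" and N_max: "\<And>I. I \<in> C \<Longrightarrow> I \<noteq> \<Omega> \<Longrightarrow> N \<subseteq> I \<Longrightarrow> I = N"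
    using finite_has_maximal[of "C - {\<Omega>}"] \<open>finite C\<close> \<open>{} \<in> C\<close> assms(2) by blast
  have "N \<subseteq> \<Omega>" using N CP by auto
  obtain r where r: "\<Omega> - N = {r}"
    using separating_chain_gap_singleton[OF chain CP separating N(1) \<open>\<Omega> \<in> C\<close>] N N_max \<open>N \<subseteq> \<Omega>\<close>
    by auto
  have "N = \<Omega> - {r}" using r \<open>N \<subseteq> \<Omega>\<close> by blast
  show ?thesis
  proof (rule that)
    show "{p} \<in> C" using M(1) p by simp
    show "p \<in> I" if "I \<in> C" "I \<noteq> {}" for I
      using chain M(1) M_min[OF that] that(1) p by blast
    show "r \<in> \<Omega>" "\<Omega> - {r} \<in> C" using r N(1) \<open>N = \<Omega> - {r}\<close> by auto
    show "r \<notin> I" if "I \<in> C" "I \<noteq> \<Omega>" for I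
      using chain N(1) N_max[OF that] that(1) r by blast
  qed
qed

lemma flag_in_maximal_chains:
  assumes "distinct [p, q, r]" "\<Omega> = {p, q, r}"
  shows "{{}, {p}, {p, q}, \<Omega>} \<in> maximal_chains \<Omega>"
proof -
  let ?C = "{{}, {p}, {p, q}, \<Omega>}"
  have C: "?C \<subseteq> Pow \<Omega>" using assms(2) by auto
  interpret sigma_algebra \<Omega> "sigma_sets \<Omega> ?C"
    using sigma_algebra_sigma_sets[OF C] .
  have flag: "{p} \<in> sigma_sets \<Omega> ?C" "{p, q} \<in> sigma_sets \<Omega> ?C" by auto
  have "{p, q} - {p} = {q}" "\<Omega> - {p, q} = {r}" using assms by auto
  then have singleton: "{x} \<in> sigma_sets \<Omega> ?C" if "x \<in> \<Omega>" for x
    using that assms(2) flag Diff[OF flag(2) flag(1)] Diff[OF top flag(2)] by auto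
  have "X \<in> sigma_sets \<Omega> ?C" if "X \<subseteq> \<Omega>" for X
  proof -
    have "finite X" using that assms(2) finite_subset by blast
    then have "(\<Union>x\<in>X. {x}) \<in> sigma_sets \<Omega> ?C"
      using that singleton by (intro finite_UN) auto
    then show ?thesis by simp
  qed
  then have "sigma_sets \<Omega> ?C = Pow \<Omega>"
    using sigma_sets_into_sp[OF C] by blast
  with C show ?thesis unfolding maximal_chains_def by auto
qed

lemma maximal_chain_card3_is_flag:
  assumes "card \<Omega> = 3" "C \<in> maximal_chains \<Omega>"
  obtains p q r where "distinct [p, q, r]" "\<Omega> = {p, q, r}" "C = {{}, {p}, {p, q}, \<Omega>}"
proof -
  have "finite \<Omega>" "\<Omega> \<noteq> {}" using assms(1) card_gt_0_iff by fastforce+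
  then obtain p r where p: "{p} \<in> C" "\<And>I. I \<in> C \<Longrightarrow> I \<noteq> {} \<Longrightarrow> p \<in> I"
    and r: "r \<in> \<Omega>" "\<Omega> - {r} \<in> C" "\<And>I. I \<in> C \<Longrightarrow> I \<noteq> \<Omega> \<Longrightarrow> r \<notin> I"
    using maximal_chain_least_greatest assms(2) by blast
  have "card (\<Omega> - {r}) = 2" using assms(1) r(1) by simp
  then have "\<Omega> - {r} \<noteq> {}" by (intro notI) simp
  then have "p \<in> \<Omega> - {r}" using p(2) r(2) by blast
  then obtain q where pqr: "distinct [p, q, r]" "\<Omega> = {p, q, r}"
    using card3_complete_pair[OF assms(1), of p r] r(1) by blast
  have "C \<subseteq> Pow \<Omega>" "{} \<in> C" "\<Omega> \<in> C" using assms(2) unfolding maximal_chains_def by auto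
  have "T \<in> {{}, {p}, {p, q}, \<Omega>}" if "T \<in> C" for T
  proof (cases "T = {} \<or> T = \<Omega>")
    case False
    then have "p \<in> T" "r \<notin> T" "T \<subseteq> \<Omega>" using p(2) r(3) that \<open>C \<subseteq> Pow \<Omega>\<close> by auto
    then show ?thesis using pqr by auto
  qed auto
  moreover have "\<Omega> - {r} = {p, q}" using pqr by auto
  ultimately have "C = {{}, {p}, {p, q}, \<Omega>}"
    using p(1) r(2) \<open>{} \<in> C\<close> \<open>\<Omega> \<in> C\<close> by auto
  with pqr that show ?thesis by blast
qed

lemma finite_maximal_chains:
  assumes "finite \<Omega>"
  shows "finite (maximal_chains \<Omega>)"
proof -
  have "maximal_chains \<Omega> \<subseteq> Pow (Pow \<Omega>)" unfolding maximal_chains_def by auto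
  then show ?thesis using assms by (simp add: finite_subset)
qed

lemma chain_measure_eqI:
  assumes "C \<in> maximal_chains \<Omega>" "sets \<mu> = Pow \<Omega>" "\<And>I. I \<in> C \<Longrightarrow> emeasure \<mu> I = ennreal (w I)"
  shows "chain_measure \<Omega> w C = \<mu>"
  unfolding chain_measure_def
proof (rule the_equality)
  have C: "C \<subseteq> Pow \<Omega>" "\<Omega> \<in> C" "sigma_sets \<Omega> C = Pow \<Omega>"
    and chain: "\<forall>A\<in>C. \<forall>B\<in>C. A \<subseteq> B \<or> B \<subseteq> A"
    using assms(1) unfolding maximal_chains_def by auto
  have "Int_stable C"
    unfolding Int_stable_def using chain by (metis Int_absorb1 Int_absorb2)
  show "\<nu> = \<mu>" if "sets \<nu> = Pow \<Omega> \<and> (\<forall>I\<in>C. emeasure \<nu> I = ennreal (w I))" for \<nu>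
    by (rule measure_eqI_generator_eq[where E = C and \<Omega> = \<Omega> and A = "\<lambda>_. \<Omega>"])
      (use that assms C \<open>Int_stable C\<close> in auto)
qed (use assms in auto)

definition flag_mass :: "('a set \<Rightarrow> real) \<Rightarrow> 'a \<Rightarrow> 'a \<Rightarrow> 'a \<Rightarrow> 'a \<Rightarrow> real" where
  "flag_mass w p q r x =
     (if x = p then w {p} else if x = q then w {p, q} - w {p}
      else if x = r then w {p, q, r} - w {p, q} else 0)"

lemma flag_mass_nonneg:
  assumes "\<Omega> = {p, q, r}" "non_decreasing_on \<Omega> w" "w {} = 0"
  shows "0 \<le> flag_mass w p q r x"
proof -
  have "w {} \<le> w {p}" "w {p} \<le> w {p, q}" "w {p, q} \<le> w {p, q, r}"
    using assms(1,2) unfolding non_decreasing_on_def by auto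
  with assms(3) show ?thesis unfolding flag_mass_def by auto
qed

lemma sum_flag_mass_flag:
  assumes "distinct [p, q, r]" "w {} = 0" "A \<in> {{}, {p}, {p, q}, {p, q, r}}"
  shows "sum (flag_mass w p q r) A = w A"
  using assms by (auto simp: flag_mass_def)

lemma sum_flag_mass_le_submodular:
  assumes "distinct [p, q, r]" "submodular_on {p, q, r} w" "w {} = 0" "A \<subseteq> {p, q, r}"
  shows "sum (flag_mass w p q r) A \<le> w A"
proof -
  have sub: "w (X \<union> Y) + w (X \<inter> Y) \<le> w X + w Y" if "X \<subseteq> {p, q, r}" "Y \<subseteq> {p, q, r}" for X Y
    using assms(2) that unfolding submodular_on_def by blast
  have distinct: "p \<noteq> q" "p \<noteq> r" "q \<noteq> r" using assms(1) by auto
  then have "{p} \<union> {q} = {p, q}" "{p} \<inter> {q} = {}" "{p, q} \<union> {r} = {p, q, r}" "{p, q} \<inter> {r} = {}"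
    "{p, q} \<union> {p, r} = {p, q, r}" "{p, q} \<inter> {p, r} = {p}" "{p} \<union> {q, r} = {p, q, r}" "{p} \<inter> {q, r} = {}"
    by auto
  then have ineqs: "w {p, q} \<le> w {p} + w {q}" "w {p, q, r} \<le> w {p, q} + w {r}"
    "w {p, q, r} + w {p} \<le> w {p, q} + w {p, r}" "w {p, q, r} \<le> w {p} + w {q, r}"
    using sub[of "{p}" "{q}"] sub[of "{p, q}" "{r}"] sub[of "{p, q}" "{p, r}"] sub[of "{p}" "{q, r}"]
      assms(3) by auto
  from assms(4) show ?thesis
    by (cases rule: subset3_cases) (use ineqs distinct assms(3) in \<open>simp_all add: flag_mass_def\<close>)
qed

lemma chain_measure_flag:
  assumes "distinct [p, q, r]" "\<Omega> = {p, q, r}" "non_decreasing_on \<Omega> w" "w {} = 0"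
  shows "chain_measure \<Omega> w {{}, {p}, {p, q}, \<Omega>} = point_measure \<Omega> (\<lambda>x. ennreal (flag_mass w p q r x))"
proof (rule chain_measure_eqI)
  have "finite \<Omega>" using assms(2) by simp
  then show "emeasure (point_measure \<Omega> (\<lambda>x. ennreal (flag_mass w p q r x))) I = ennreal (w I)"
    if "I \<in> {{}, {p}, {p, q}, \<Omega>}" for I
    using that assms sum_flag_mass_flag[of p q r w I]
    by (subst emeasure_point_measure_finite) (auto simp: flag_mass_nonneg)
qed (use flag_in_maximal_chains[OF assms(1,2)] in \<open>auto simp: sets_point_measure\<close>)

lemma measure_chain_measure_flag:
  assumes "distinct [p, q, r]" "\<Omega> = {p, q, r}" "non_decreasing_on \<Omega> w" "w {} = 0" "A \<subseteq> \<Omega>"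
  shows "measure (chain_measure \<Omega> w {{}, {p}, {p, q}, \<Omega>}) A = sum (flag_mass w p q r) A"
  unfolding chain_measure_flag[OF assms(1-4)]
  using assms by (simp add: measure_point_measure_finite_if flag_mass_nonneg)

lemma next_v_cong:
  assumes "\<And>A. A \<subseteq> \<Omega> \<Longrightarrow> w A = w' A"
  shows "next_v \<Omega> w = next_v \<Omega> w'"
proof -
  have "chain_measure \<Omega> w C = chain_measure \<Omega> w' C" if "C \<in> maximal_chains \<Omega>" for C
  proof -
    have "\<forall>I\<in>C. w I = w' I" using that assms unfolding maximal_chains_def by auto
    then show ?thesis unfolding chain_measure_def by simp
  qed
  then show ?thesis unfolding next_v_def by (intro ext SUP_cong) auto
qed

lemma measure_chain_measure_le_next_v:
  assumes "finite \<Omega>" "C \<in> maximal_chains \<Omega>"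
  shows "measure (chain_measure \<Omega> w C) A \<le> next_v \<Omega> w A"
proof -
  have "finite (maximal_chains \<Omega>)"
    using assms(1) by (rule finite_maximal_chains)
  then show ?thesis
    unfolding next_v_def using assms(2) by (intro cSup_upper) (auto intro: bdd_above_finite)
qed

lemma next_v_attained:
  assumes "finite \<Omega>" "maximal_chains \<Omega> \<noteq> {}"
  obtains C where "C \<in> maximal_chains \<Omega>" "next_v \<Omega> w A = measure (chain_measure \<Omega> w C) A"
proof -
  let ?values = "(\<lambda>C. measure (chain_measure \<Omega> w C) A) ` maximal_chains \<Omega>"
  have "finite (maximal_chains \<Omega>)"
    using assms(1) by (rule finite_maximal_chains)
  then have "Sup ?values \<in> ?values"
    using assms(2) by (simp add: cSup_eq_Max)
  then show ?thesis using that unfolding next_v_def by auto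
qed

locale three_point_capacity =
  fixes \<Omega> :: "'a set" and w :: "'a set \<Rightarrow> real"
  assumes card_eq_3: "card \<Omega> = 3"
    and non_decreasing: "non_decreasing_on \<Omega> w"
    and empty: "w {} = 0"
begin

lemma finite_space: "finite \<Omega>"
  using card_eq_3 card_gt_0_iff by fastforce

lemma flag_sum_le_next_v:
  assumes "distinct [p, q, r]" "\<Omega> = {p, q, r}" "A \<subseteq> \<Omega>"
  shows "sum (flag_mass w p q r) A \<le> next_v \<Omega> w A"
  using measure_chain_measure_le_next_v[OF finite_space flag_in_maximal_chains[OF assms(1,2)], of w A]
    measure_chain_measure_flag[OF assms(1,2) non_decreasing empty assms(3)]
  by simp

lemma next_v_attained_by_flag:
  assumes "A \<subseteq> \<Omega>"
  obtains p q r where "distinct [p, q, r]" "\<Omega> = {p, q, r}"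
    "next_v \<Omega> w A = sum (flag_mass w p q r) A"
proof -
  obtain a b c where "\<Omega> = {a, b, c}" "a \<noteq> b" "b \<noteq> c" "a \<noteq> c"
    using card_eq_3 unfolding card_3_iff by blast
  then have "{{}, {a}, {a, b}, \<Omega>} \<in> maximal_chains \<Omega>"
    by (intro flag_in_maximal_chains) auto
  then have "maximal_chains \<Omega> \<noteq> {}" by blast
  with finite_space obtain C where C: "C \<in> maximal_chains \<Omega>"
    "next_v \<Omega> w A = measure (chain_measure \<Omega> w C) A"
    by (rule next_v_attained)
  obtain p q r where pqr: "distinct [p, q, r]" "\<Omega> = {p, q, r}" and "C = {{}, {p}, {p, q}, \<Omega>}"
    using card_eq_3 C(1) by (rule maximal_chain_card3_is_flag)
  with C(2) have "next_v \<Omega> w A = sum (flag_mass w p q r) A"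
    using measure_chain_measure_flag[OF pqr non_decreasing empty assms] by simp
  with pqr show ?thesis by (rule that)
qed

lemma next_v_empty: "next_v \<Omega> w {} = 0"
proof -
  obtain p q r where "next_v \<Omega> w {} = sum (flag_mass w p q r) {}"
    using next_v_attained_by_flag[of "{}"] by blast
  then show ?thesis by simp
qed

lemma next_v_space: "next_v \<Omega> w \<Omega> = w \<Omega>"
proof -
  obtain p q r where "distinct [p, q, r]" "\<Omega> = {p, q, r}" "next_v \<Omega> w \<Omega> = sum (flag_mass w p q r) \<Omega>"
    using next_v_attained_by_flag[of \<Omega>] by blast
  then show ?thesis using sum_flag_mass_flag[of p q r w \<Omega>] empty by simp
qed

lemma le_next_v:
  assumes "A \<subseteq> \<Omega>"
  shows "w A \<le> next_v \<Omega> w A"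
proof -
  obtain p q r where "distinct [p, q, r]" "\<Omega> = {p, q, r}" "A \<in> {{}, {p}, {p, q}, \<Omega>}"
    using card3_subset_in_flag[OF card_eq_3 assms] .
  then show ?thesis
    using flag_sum_le_next_v[of p q r A] sum_flag_mass_flag[of p q r w A] empty assms by auto
qed

lemma next_v_non_decreasing: "non_decreasing_on \<Omega> (next_v \<Omega> w)"
  unfolding non_decreasing_on_def
proof (intro allI impI, elim conjE)
  fix A B assume "A \<subseteq> B" "B \<subseteq> \<Omega>"
  then have "A \<subseteq> \<Omega>" by blast
  then obtain p q r where pqr: "distinct [p, q, r]" "\<Omega> = {p, q, r}"
    and eq: "next_v \<Omega> w A = sum (flag_mass w p q r) A"
    by (rule next_v_attained_by_flag)
  have "finite B" using \<open>B \<subseteq> \<Omega>\<close> finite_space by (rule finite_subset)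
  then have "sum (flag_mass w p q r) A \<le> sum (flag_mass w p q r) B"
    using \<open>A \<subseteq> B\<close> flag_mass_nonneg[OF pqr(2) non_decreasing empty] by (rule sum_mono2)
  also have "\<dots> \<le> next_v \<Omega> w B" using flag_sum_le_next_v[OF pqr \<open>B \<subseteq> \<Omega>\<close>] .
  finally show "next_v \<Omega> w A \<le> next_v \<Omega> w B" using eq by simp
qed

lemma next_v_submodular_at_common_flag:
  assumes "A \<subseteq> \<Omega>" "B \<subseteq> \<Omega>" and pqr: "distinct [p, q, r]" "\<Omega> = {p, q, r}"
    and "next_v \<Omega> w (A \<union> B) = sum (flag_mass w p q r) (A \<union> B)"
    and "next_v \<Omega> w (A \<inter> B) = sum (flag_mass w p q r) (A \<inter> B)"
  shows "next_v \<Omega> w (A \<union> B) + next_v \<Omega> w (A \<inter> B) \<le> next_v \<Omega> w A + next_v \<Omega> w B"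
proof -
  have "finite A" "finite B" using assms(1,2) finite_space finite_subset by auto
  then have "next_v \<Omega> w (A \<union> B) + next_v \<Omega> w (A \<inter> B)
      = sum (flag_mass w p q r) A + sum (flag_mass w p q r) B"
    using assms(5,6) by (simp add: sum.union_inter)
  also have "\<dots> \<le> next_v \<Omega> w A + next_v \<Omega> w B"
    using flag_sum_le_next_v[OF pqr assms(1)] flag_sum_le_next_v[OF pqr assms(2)] by simp
  finally show ?thesis .
qed

lemma next_v_submodular: "submodular_on \<Omega> (next_v \<Omega> w)"
  unfolding submodular_on_def
proof (intro allI impI, elim conjE)
  fix A B assume A: "A \<subseteq> \<Omega>" and B: "B \<subseteq> \<Omega>"
  let ?v = "next_v \<Omega> w"
  consider "A \<subseteq> B \<or> B \<subseteq> A" | "A \<inter> B = {}" | "A \<union> B = \<Omega>"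
    using subsets_card_le_3_cases[OF finite_space _ A B] card_eq_3 by auto
  then show "?v (A \<union> B) + ?v (A \<inter> B) \<le> ?v A + ?v B"
  proof cases
    case 1
    then show ?thesis by (auto simp: Un_absorb1 Un_absorb2 Int_absorb1 Int_absorb2)
  next
    case 2
    have "A \<union> B \<subseteq> \<Omega>" using A B by blast
    then obtain p q r where "distinct [p, q, r]" "\<Omega> = {p, q, r}"
      "?v (A \<union> B) = sum (flag_mass w p q r) (A \<union> B)"
      by (rule next_v_attained_by_flag)
    then show ?thesis using next_v_submodular_at_common_flag[OF A B] 2 next_v_empty by simp
  next
    case 3
    have "A \<inter> B \<subseteq> \<Omega>" using A by blast
    then obtain p q r where pqr: "distinct [p, q, r]" "\<Omega> = {p, q, r}"
      "?v (A \<inter> B) = sum (flag_mass w p q r) (A \<inter> B)"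
      by (rule next_v_attained_by_flag)
    have union: "?v (A \<union> B) = sum (flag_mass w p q r) (A \<union> B)"
      using 3 pqr next_v_space sum_flag_mass_flag[of p q r w \<Omega>] empty by simp
    show ?thesis by (rule next_v_submodular_at_common_flag[OF A B pqr(1,2) union pqr(3)])
  qed
qed

lemma next_v_eq_if_submodular:
  assumes "submodular_on \<Omega> w" "A \<subseteq> \<Omega>"
  shows "next_v \<Omega> w A = w A"
proof (rule antisym)
  obtain p q r where "distinct [p, q, r]" "\<Omega> = {p, q, r}" "next_v \<Omega> w A = sum (flag_mass w p q r) A"
    using next_v_attained_by_flag[OF assms(2)] .
  then show "next_v \<Omega> w A \<le> w A"
    using sum_flag_mass_le_submodular[of p q r w A] assms empty by simp
qed (rule le_next_v[OF assms(2)])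

end

theorem corollary22:
  fixes \<Omega> :: "'a set" and v0 :: "'a set \<Rightarrow> real"
  assumes "card \<Omega> = 3"
    and "\<forall>A. A \<subseteq> \<Omega> \<longrightarrow> 0 \<le> v0 A"
    and "non_decreasing_on \<Omega> v0"
    and "v0 {} = 0"
  shows "(\<forall>n\<ge>1. \<forall>A. A \<subseteq> \<Omega> \<longrightarrow> ((next_v \<Omega> ^^ n) v0) A = ((next_v \<Omega> ^^ 1) v0) A)
         \<and> submodular_on \<Omega> ((next_v \<Omega> ^^ 1) v0)"
proof -
  interpret v0: three_point_capacity \<Omega> v0
    using assms(1,3,4) by unfold_locales
  define v1 where "v1 = next_v \<Omega> v0"
  interpret v1: three_point_capacity \<Omega> v1
    unfolding v1_def using assms(1) v0.next_v_non_decreasing v0.next_v_empty by unfold_locales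
  have submodular: "submodular_on \<Omega> v1"
    unfolding v1_def by (rule v0.next_v_submodular)
  have "(next_v \<Omega> ^^ n) v0 A = v1 A" if "n \<ge> 1" "A \<subseteq> \<Omega>" for n A
    using that
  proof (induction n arbitrary: A rule: nat_induct_at_least)
    case base
    then show ?case by (simp add: v1_def)
  next
    case (Suc n)
    have "(next_v \<Omega> ^^ Suc n) v0 = next_v \<Omega> ((next_v \<Omega> ^^ n) v0)" by simp
    also have "\<dots> = next_v \<Omega> v1" by (rule next_v_cong) (rule Suc.IH)
    finally have "(next_v \<Omega> ^^ Suc n) v0 = next_v \<Omega> v1" .
    then show ?case
      using v1.next_v_eq_if_submodular[OF submodular Suc.prems] by simp
  qed
  then show ?thesis using submodular by (simp add: v1_def)
qed

end
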